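(* Let $\mu$ be a locally finite positive Borel measure on $\mathbb{R}$ and let $I$ be a dyadic interval with left and right halves $I_{\mathrm{left}},I_{\mathrm{right}}$. For an interval $J$ let \[ \boldsymbol{M}_{J}=\begin{bmatrix}\int_J d\mu&\int_J x\,d\mu\\ \int_J x\,d\mu&\int_J x^2d\mu\end{bmatrix}. \] (1) If $\mu(I_{\mathrm{left}})>0$ and $\mu(I_{\mathrm{right}})>0$, and $\boldsymbol{M}_{I_{\mathrm{left}}}$ is positive definite while $\det\boldsymbol{M}_{I_{\mathrm{right}}}=0$, then $L_{I;2}^{2}(\mu)$ is one-dimensional (so there is exactly one nonzero Alpert function $a_I^{\mu,1}=a_I^{\mu,2}\neq0$ up to sign); the same conclusion holds when the roles of $I_{\mathrm{left}}$ and $I_{\mathrm{right}}$ are interchanged. (2) In all other cases in which at least one of $\boldsymbol{M}_{I_{\mathrm{left}}}$, $\boldsymbol{M}_{I_{\mathrm{right}}}$ fails to be positive definite, $L_{I;2}^{2}(\mu)=\{0\}$ in $L^2(\mu)$ (i.e. $a_I^{\mu,1}=a_I^{\mu,2}=0$).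
   Context: $L_{I;2}^{2}(\mu)$ is the subspace of $L^{2}(\mu)$ of functions $f=(\alpha_1x+\alpha_0)\mathbf{1}_{I_{\mathrm{left}}}+(\beta_1x+\beta_0)\mathbf{1}_{I_{\mathrm{right}}}$ with real coefficients such that $\int f\,d\mu=\int f(x)x\,d\mu(x)=0$. The Alpert functions $a_I^{\mu,1},a_I^{\mu,2}$ are an orthonormal (in $L^2(\mu)$) family spanning $L^2_{I;2}(\mu)$, with vanishing functions discarded. *)

theory Defs
  imports "HOL-Analysis.Analysis"
begin

definition loc_finite_borel :: "real measure \<Rightarrow> bool" where
  "loc_finite_borel M \<longleftrightarrow> sets M = sets borel \<and> (\<forall>a b. emeasure M {a..b} < \<infinity>)"

definition dyadic_left :: "int \<Rightarrow> int \<Rightarrow> real set" where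
  "dyadic_left j k = {of_int k * 2 powr of_int j ..< (of_int k + 1/2) * 2 powr of_int j}"

definition dyadic_right :: "int \<Rightarrow> int \<Rightarrow> real set" where
  "dyadic_right j k = {(of_int k + 1/2) * 2 powr of_int j ..< (of_int k + 1) * 2 powr of_int j}"

definition moment_matrix :: "real measure \<Rightarrow> real set \<Rightarrow> real^2^2" where
  "moment_matrix M J =
     vector [vector [(LINT x:J|M. 1), (LINT x:J|M. x)],
             vector [(LINT x:J|M. x), (LINT x:J|M. x^2)]]"

definition pos_def_mat :: "real^2^2 \<Rightarrow> bool" where
  "pos_def_mat A \<longleftrightarrow> (\<forall>v. v \<noteq> 0 \<longrightarrow> v \<bullet> (A *v v) > 0)"

text \<open>The space L^2_{I;2}(mu), as a set of representatives (functions real => real).\<close>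
definition L2_I2 :: "real measure \<Rightarrow> real set \<Rightarrow> real set \<Rightarrow> (real \<Rightarrow> real) set" where
  "L2_I2 M Il Ir = {f. (\<exists>\<alpha>1 \<alpha>0 \<beta>1 \<beta>0.
       f = (\<lambda>x. indicator Il x * (\<alpha>1 * x + \<alpha>0) + indicator Ir x * (\<beta>1 * x + \<beta>0)))
     \<and> (\<integral>x. f x \<partial>M) = 0 \<and> (\<integral>x. f x * x \<partial>M) = 0}"

end

theory Submission
  imports Defs
begin

(*
  On each half J the moment matrix M_J is the Gram matrix of L^2(mu restricted to J) on the
  linear polynomials p_v(x) = v1 + v2 x.  For f = 1_Il p_a + 1_Ir p_b the two orthogonality
  conditions say M_Il a + M_Ir b = 0, while f = 0 mu-a.e. iff M_Il a = 0 and M_Ir b = 0.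
  Hence L^2_{I;2}(mu) modulo null functions is the intersection of the ranges of M_Il and M_Ir.
  A singular M_J on a half of positive mass forces mu restricted to J to be a point mass at
  some c in J, so the range of M_J is the line through (1, c).  In case (1) the intersection
  is that line.  In case (2) either one matrix vanishes (a null half), or both halves carry
  atoms c in Il and d in Ir with c <> d, and the intersection is {0}.
*)

lemma det_nonzero_iff_trivial_kernel:
  fixes A :: "'a::field^'n^'n"
  shows "det A \<noteq> 0 \<longleftrightarrow> (\<forall>v. A *v v = 0 \<longrightarrow> v = 0)"
  by (simp add: invertible_det_nz[symmetric] invertible_left_inverse matrix_left_invertible_ker)

lemma det_nonzero_imp_surj:
  fixes A :: "'a::field^'n^'n"
  assumes "det A \<noteq> 0"
  obtains x where "A *v x = y"
  using assms matrix_right_invertible_surjective[of A]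
  by (metis invertible_det_nz invertible_right_inverse surjD)

definition lin_poly :: "real^2 \<Rightarrow> real \<Rightarrow> real" where
  "lin_poly v x = v$1 + v$2 * x"

locale finite_second_moments =
  fixes M :: "real measure" and J :: "real set"
  assumes J_sets [measurable]: "J \<in> sets M"
    and set_integrable_power: "\<And>k. k \<le> 2 \<Longrightarrow> set_integrable M J (\<lambda>x. x ^ k)"
begin

lemma emeasure_finite: "emeasure M J \<noteq> \<infinity>"
  using set_integrable_power[of 0] J_sets
  by (simp add: set_integrable_def integrable_indicator_iff sets.Int_space_eq2)

lemma AE_not_in_iff_null: "(AE x in M. x \<notin> J) \<longleftrightarrow> emeasure M J = 0"
  using AE_iff_null_sets[OF J_sets] by (simp add: null_sets_def)

lemma set_integrable_monomials [simp]:
  "set_integrable M J (\<lambda>x. c :: real)" "set_integrable M J (\<lambda>x. x)" "set_integrable M J (\<lambda>x. x\<^sup>2)"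
  using set_integrable_mult_right[OF set_integrable_power[of 0], of c] set_integrable_power[of 1]
    set_integrable_power[of 2]
  by simp_all

lemma set_integral_quadratic:
  "(LINT x:J|M. a + b * x + c * x\<^sup>2) =
     a * (LINT x:J|M. 1) + b * (LINT x:J|M. x) + c * (LINT x:J|M. x\<^sup>2)"
  using set_integral_mult_right[where a = a and f = "\<lambda>_. 1" and A = J and M = M] by simp

lemma lin_poly_mult_eq_quadratic:
  "lin_poly w x * lin_poly v x = w$1 * v$1 + (w$1 * v$2 + w$2 * v$1) * x + w$2 * v$2 * x\<^sup>2"
  by (simp add: lin_poly_def power2_eq_square algebra_simps)

lemma set_integrable_lin_poly_mult: "set_integrable M J (\<lambda>x. lin_poly w x * lin_poly v x)"
  unfolding lin_poly_mult_eq_quadratic by simp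

lemma inner_moment_matrix:
  "w \<bullet> (moment_matrix M J *v v) = (LINT x:J|M. lin_poly w x * lin_poly v x)"
  unfolding lin_poly_mult_eq_quadratic set_integral_quadratic
  by (simp add: moment_matrix_def inner_vec_def matrix_vector_mult_def sum_2 algebra_simps)

lemma inner_moment_matrix_self_eq_integral:
  "v \<bullet> (moment_matrix M J *v v) = (\<integral>x. indicator J x * (lin_poly v x)\<^sup>2 \<partial>M)"
  unfolding inner_moment_matrix set_lebesgue_integral_def by (simp add: power2_eq_square)

lemma inner_moment_matrix_self_nonneg: "0 \<le> v \<bullet> (moment_matrix M J *v v)"
  unfolding inner_moment_matrix_self_eq_integral by (intro integral_nonneg_AE) simp

lemma inner_moment_matrix_self_eq_0_iff:
  "v \<bullet> (moment_matrix M J *v v) = 0 \<longleftrightarrow> (AE x in M. x \<in> J \<longrightarrow> lin_poly v x = 0)"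
proof -
  have "integrable M (\<lambda>x. indicator J x * (lin_poly v x)\<^sup>2)"
    using set_integrable_lin_poly_mult[of v v] by (simp add: set_integrable_def power2_eq_square)
  then have "v \<bullet> (moment_matrix M J *v v) = 0 \<longleftrightarrow> (AE x in M. indicator J x * (lin_poly v x)\<^sup>2 = 0)"
    unfolding inner_moment_matrix_self_eq_integral by (rule integral_nonneg_eq_0_iff_AE) simp
  then show ?thesis by (simp split: split_indicator)
qed

lemma moment_matrix_mult_eq_0_iff:
  "moment_matrix M J *v v = 0 \<longleftrightarrow> (AE x in M. x \<in> J \<longrightarrow> lin_poly v x = 0)"
proof
  assume "moment_matrix M J *v v = 0"
  then show "AE x in M. x \<in> J \<longrightarrow> lin_poly v x = 0"
    using inner_moment_matrix_self_eq_0_iff[of v] by simp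
next
  assume vanish: "AE x in M. x \<in> J \<longrightarrow> lin_poly v x = 0"
  have "w \<bullet> (moment_matrix M J *v v) = 0" for w
  proof -
    have "AE x in M. indicator J x *\<^sub>R (lin_poly w x * lin_poly v x) = 0"
      using vanish by eventually_elim (simp split: split_indicator)
    then show ?thesis
      unfolding inner_moment_matrix set_lebesgue_integral_def by (rule integral_eq_zero_AE)
  qed
  from this[of "moment_matrix M J *v v"] show "moment_matrix M J *v v = 0" by simp
qed

lemma pos_def_moment_matrix_iff: "pos_def_mat (moment_matrix M J) \<longleftrightarrow> det (moment_matrix M J) \<noteq> 0"
proof -
  have "v \<bullet> (moment_matrix M J *v v) = 0 \<longleftrightarrow> moment_matrix M J *v v = 0" for v
    by (simp add: inner_moment_matrix_self_eq_0_iff moment_matrix_mult_eq_0_iff)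
  then show ?thesis
    unfolding pos_def_mat_def det_nonzero_iff_trivial_kernel
    using inner_moment_matrix_self_nonneg by (metis order_less_le)
qed

lemma moment_matrix_mult_null:
  assumes "emeasure M J = 0"
  shows "moment_matrix M J *v v = 0"
proof -
  have "AE x in M. x \<notin> J"
    using assms by (simp add: AE_not_in_iff_null)
  then show ?thesis
    unfolding moment_matrix_mult_eq_0_iff by (rule eventually_mono) simp
qed

lemma set_integral_point_mass:
  assumes "AE x in M. x \<in> J \<longrightarrow> x = c" and "set_integrable M J g"
  shows "(LINT x:J|M. g x) = measure M J * g c"
proof -
  have "(LINT x:J|M. g x) = (LINT x:J|M. g c)"
    unfolding set_lebesgue_integral_def
  proof (rule integral_cong_AE)
    show "(\<lambda>x. indicator J x *\<^sub>R g x) \<in> borel_measurable M"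
      using assms(2) unfolding set_integrable_def by (rule borel_measurable_integrable)
    show "AE x in M. indicator J x *\<^sub>R g x = indicator J x *\<^sub>R g c"
      using assms(1) by eventually_elim (simp split: split_indicator)
  qed simp
  also have "\<dots> = measure M J * g c"
    using set_integral_const[OF J_sets emeasure_finite, of "g c"] by simp
  finally show ?thesis .
qed

lemma moment_matrix_mult_point_mass:
  assumes "AE x in M. x \<in> J \<longrightarrow> x = c"
  shows "moment_matrix M J *v v = (measure M J * lin_poly v c) *\<^sub>R vector [1, c]"
proof -
  have inner: "w \<bullet> (moment_matrix M J *v v) = measure M J * (lin_poly w c * lin_poly v c)" for w
    unfolding inner_moment_matrix using set_integral_point_mass[OF assms set_integrable_lin_poly_mult] .
  show ?thesis
    using inner[of "vector [1, 0]"] inner[of "vector [0, 1]"]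
    by (simp add: vec_eq_iff forall_2 inner_vec_def sum_2 lin_poly_def)
qed

lemma obtain_point_mass:
  assumes "det (moment_matrix M J) = 0" and "emeasure M J \<noteq> 0"
  obtains c where "c \<in> J" and "AE x in M. x \<in> J \<longrightarrow> x = c"
proof -
  (* a kernel vector of M_J is a linear polynomial vanishing mu-a.e. on J; its root is the atom *)
  obtain v where "v \<noteq> 0" and "moment_matrix M J *v v = 0"
    using assms(1) det_nonzero_iff_trivial_kernel by blast
  then have vanish: "AE x in M. x \<in> J \<longrightarrow> v$1 + v$2 * x = 0"
    by (simp add: moment_matrix_mult_eq_0_iff lin_poly_def)
  have not_null: "\<not> (AE x in M. x \<notin> J)"
    using assms(2) by (simp add: AE_not_in_iff_null)
  have "v$2 \<noteq> 0"
  proof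
    assume "v$2 = 0"
    with \<open>v \<noteq> 0\<close> have "v$1 \<noteq> 0" by (simp add: vec_eq_iff forall_2)
    with vanish \<open>v$2 = 0\<close> have "AE x in M. x \<notin> J" by simp
    with not_null show False ..
  qed
  define c where "c = - v$1 / v$2"
  have "v$1 + v$2 * x = v$2 * (x - c)" for x
    using \<open>v$2 \<noteq> 0\<close> unfolding c_def by (simp add: field_simps)
  then have root: "v$1 + v$2 * x = 0 \<longleftrightarrow> x = c" for x
    using \<open>v$2 \<noteq> 0\<close> by simp
  have point: "AE x in M. x \<in> J \<longrightarrow> x = c"
    using vanish by (simp add: root)
  moreover have "c \<in> J"
  proof (rule ccontr)
    assume "c \<notin> J"
    with point have "AE x in M. x \<notin> J"
      by (auto elim: eventually_mono)
    with not_null show False ..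
  qed
  ultimately show ?thesis using that by blast
qed

end

definition split_poly :: "real set \<Rightarrow> real set \<Rightarrow> real^2 \<Rightarrow> real^2 \<Rightarrow> real \<Rightarrow> real" where
  "split_poly Il Ir a b x = indicator Il x * lin_poly a x + indicator Ir x * lin_poly b x"

lemma split_poly_diff_scaleR:
  "split_poly Il Ir (a - s *\<^sub>R a') (b - s *\<^sub>R b') x = split_poly Il Ir a b x - s * split_poly Il Ir a' b' x"
  by (simp add: split_poly_def lin_poly_def algebra_simps)

lemma L2_I2_commute: "L2_I2 M Il Ir = L2_I2 M Ir Il"
  unfolding L2_I2_def by (auto simp: add.commute)

locale split_moments =
  left: finite_second_moments M Il + right: finite_second_moments M Ir
  for M :: "real measure" and Il Ir :: "real set" +
  assumes disjoint: "Il \<inter> Ir = {}"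
begin

lemma integral_split_poly_mult:
  "(\<integral>x. split_poly Il Ir a b x * lin_poly w x \<partial>M) =
     w \<bullet> (moment_matrix M Il *v a + moment_matrix M Ir *v b)"
proof -
  have "split_poly Il Ir a b x * lin_poly w x =
      indicator Il x *\<^sub>R (lin_poly w x * lin_poly a x) + indicator Ir x *\<^sub>R (lin_poly w x * lin_poly b x)" for x
    by (simp add: split_poly_def algebra_simps)
  then show ?thesis
    using left.set_integrable_lin_poly_mult[of w a] right.set_integrable_lin_poly_mult[of w b]
    by (simp add: inner_add_right left.inner_moment_matrix right.inner_moment_matrix
        set_lebesgue_integral_def set_integrable_def)
qed

lemma L2_I2_eq:
  "L2_I2 M Il Ir =
     {split_poly Il Ir a b | a b. moment_matrix M Il *v a + moment_matrix M Ir *v b = 0}"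
proof -
  have moments:
    "(\<integral>x. split_poly Il Ir a b x \<partial>M) = (moment_matrix M Il *v a + moment_matrix M Ir *v b) $ 1"
    "(\<integral>x. split_poly Il Ir a b x * x \<partial>M) = (moment_matrix M Il *v a + moment_matrix M Ir *v b) $ 2"
    for a b
    using integral_split_poly_mult[of a b "vector [1, 0]"] integral_split_poly_mult[of a b "vector [0, 1]"]
    by (simp_all add: lin_poly_def inner_vec_def sum_2)
  have coefficients: "(\<lambda>x. indicator Il x * (\<alpha>1 * x + \<alpha>0) + indicator Ir x * (\<beta>1 * x + \<beta>0)) =
      split_poly Il Ir (vector [\<alpha>0, \<alpha>1]) (vector [\<beta>0, \<beta>1])" for \<alpha>1 \<alpha>0 \<beta>1 \<beta>0
    by (simp add: fun_eq_iff split_poly_def lin_poly_def algebra_simps)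
  have vector_components: "vector [v$1, v$2] = v" for v :: "real^2"
    by (simp add: vec_eq_iff forall_2)
  show ?thesis
  proof (intro set_eqI iffI)
    fix f
    assume "f \<in> L2_I2 M Il Ir"
    then obtain \<alpha>1 \<alpha>0 \<beta>1 \<beta>0 where f: "f = split_poly Il Ir (vector [\<alpha>0, \<alpha>1]) (vector [\<beta>0, \<beta>1])"
      and "(\<integral>x. f x \<partial>M) = 0" and "(\<integral>x. f x * x \<partial>M) = 0"
      unfolding L2_I2_def coefficients by blast
    then show "f \<in> {split_poly Il Ir a b | a b. moment_matrix M Il *v a + moment_matrix M Ir *v b = 0}"
      using moments by (auto simp: vec_eq_iff forall_2)
  next
    fix f
    assume "f \<in> {split_poly Il Ir a b | a b. moment_matrix M Il *v a + moment_matrix M Ir *v b = 0}"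
    then obtain a b where f: "f = split_poly Il Ir a b"
      and sum: "moment_matrix M Il *v a + moment_matrix M Ir *v b = 0"
      by blast
    have "f = (\<lambda>x. indicator Il x * (a$2 * x + a$1) + indicator Ir x * (b$2 * x + b$1))"
      unfolding f coefficients vector_components ..
    moreover have "(\<integral>x. f x \<partial>M) = 0" and "(\<integral>x. f x * x \<partial>M) = 0"
      using moments[of a b] sum unfolding f by simp_all
    ultimately show "f \<in> L2_I2 M Il Ir"
      unfolding L2_I2_def by blast
  qed
qed

lemma split_poly_AE_eq_0_iff:
  "(AE x in M. split_poly Il Ir a b x = 0) \<longleftrightarrow>
     moment_matrix M Il *v a = 0 \<and> moment_matrix M Ir *v b = 0"
proof -
  have "split_poly Il Ir a b x = 0 \<longleftrightarrow> (x \<in> Il \<longrightarrow> lin_poly a x = 0) \<and> (x \<in> Ir \<longrightarrow> lin_poly b x = 0)" for x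
    using disjoint by (auto simp: split_poly_def split: split_indicator)
  then show ?thesis
    by (simp add: left.moment_matrix_mult_eq_0_iff right.moment_matrix_mult_eq_0_iff)
qed

lemma L2_I2_trivial_if_ranges_meet_trivially:
  assumes "\<And>a b. moment_matrix M Il *v a + moment_matrix M Ir *v b = 0 \<Longrightarrow> moment_matrix M Il *v a = 0"
  shows "\<forall>f\<in>L2_I2 M Il Ir. AE x in M. f x = 0"
proof
  fix f
  assume "f \<in> L2_I2 M Il Ir"
  then obtain a b where f: "f = split_poly Il Ir a b"
    and sum: "moment_matrix M Il *v a + moment_matrix M Ir *v b = 0"
    unfolding L2_I2_eq by blast
  from sum have "moment_matrix M Il *v a = 0" by (rule assms)
  with sum have "moment_matrix M Ir *v b = 0" by simp
  with \<open>moment_matrix M Il *v a = 0\<close> show "AE x in M. f x = 0"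
    unfolding f split_poly_AE_eq_0_iff by simp
qed

lemma moment_sum_eq_0_point_masses:
  assumes "AE x in M. x \<in> Il \<longrightarrow> x = c" and "AE x in M. x \<in> Ir \<longrightarrow> x = d" and "c \<noteq> d"
    and sum: "moment_matrix M Il *v a + moment_matrix M Ir *v b = 0"
  shows "moment_matrix M Il *v a = 0"
proof -
  define s where "s = measure M Il * lin_poly a c"
  define t where "t = measure M Ir * lin_poly b d"
  have "s *\<^sub>R vector [1, c] + t *\<^sub>R vector [1, d] = (0 :: real^2)"
    using sum unfolding s_def t_def
    by (simp add: left.moment_matrix_mult_point_mass[OF assms(1)] right.moment_matrix_mult_point_mass[OF assms(2)])
  then have "t = - s" and "s * c + t * d = 0"
    by (simp_all add: vec_eq_iff forall_2 eq_neg_iff_add_eq_0)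
  then have "s * (c - d) = 0"
    by (simp add: algebra_simps)
  with \<open>c \<noteq> d\<close> have "s = 0" by simp
  then show ?thesis
    unfolding s_def left.moment_matrix_mult_point_mass[OF assms(1)] by simp
qed

lemma L2_I2_trivial:
  assumes "emeasure M Il = 0 \<or> emeasure M Ir = 0 \<or>
    det (moment_matrix M Il) = 0 \<and> det (moment_matrix M Ir) = 0"
  shows "\<forall>f\<in>L2_I2 M Il Ir. AE x in M. f x = 0"
proof (rule L2_I2_trivial_if_ranges_meet_trivially)
  fix a b
  assume sum: "moment_matrix M Il *v a + moment_matrix M Ir *v b = 0"
  show "moment_matrix M Il *v a = 0"
  proof (cases "emeasure M Il = 0 \<or> emeasure M Ir = 0")
    case True
    then show ?thesis
      using sum left.moment_matrix_mult_null right.moment_matrix_mult_null by auto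
  next
    case False
    with assms obtain c d where "c \<in> Il" "AE x in M. x \<in> Il \<longrightarrow> x = c"
      and "d \<in> Ir" "AE x in M. x \<in> Ir \<longrightarrow> x = d"
      using left.obtain_point_mass right.obtain_point_mass by metis
    moreover from \<open>c \<in> Il\<close> \<open>d \<in> Ir\<close> disjoint have "c \<noteq> d" by blast
    ultimately show ?thesis
      using moment_sum_eq_0_point_masses sum by blast
  qed
qed

lemma L2_I2_one_dimensional:
  assumes "pos_def_mat (moment_matrix M Il)" and "det (moment_matrix M Ir) = 0"
    and "emeasure M Ir \<noteq> 0"
  shows "\<exists>f\<in>L2_I2 M Il Ir. \<not> (AE x in M. f x = 0) \<and>
    (\<forall>g\<in>L2_I2 M Il Ir. \<exists>c::real. AE x in M. g x = c * f x)"
proof -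
  obtain d where point: "AE x in M. x \<in> Ir \<longrightarrow> x = d"
    using right.obtain_point_mass assms(2,3) by metis
  define b\<^sub>1 :: "real^2" where "b\<^sub>1 = vector [1, 0]"
  have right_factor: "moment_matrix M Ir *v b = lin_poly b d *\<^sub>R (moment_matrix M Ir *v b\<^sub>1)" for b
    by (simp add: right.moment_matrix_mult_point_mass[OF point] b\<^sub>1_def lin_poly_def)
  have "moment_matrix M Ir *v b\<^sub>1 \<noteq> 0"
    using assms(3) by (simp add: right.moment_matrix_mult_eq_0_iff right.AE_not_in_iff_null b\<^sub>1_def lin_poly_def)
  obtain a\<^sub>1 where a\<^sub>1: "moment_matrix M Il *v a\<^sub>1 = - (moment_matrix M Ir *v b\<^sub>1)"
    using det_nonzero_imp_surj assms(1) left.pos_def_moment_matrix_iff by metis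
  define f where "f = split_poly Il Ir a\<^sub>1 b\<^sub>1"
  have "moment_matrix M Il *v a\<^sub>1 + moment_matrix M Ir *v b\<^sub>1 = 0"
    using a\<^sub>1 by simp
  then have "f \<in> L2_I2 M Il Ir"
    unfolding L2_I2_eq f_def by blast
  moreover have "\<not> (AE x in M. f x = 0)"
    unfolding f_def split_poly_AE_eq_0_iff using \<open>moment_matrix M Ir *v b\<^sub>1 \<noteq> 0\<close> by simp
  moreover have "\<exists>c. AE x in M. g x = c * f x" if "g \<in> L2_I2 M Il Ir" for g
  proof -
    obtain a b where g: "g = split_poly Il Ir a b"
      and sum: "moment_matrix M Il *v a + moment_matrix M Ir *v b = 0"
      using \<open>g \<in> L2_I2 M Il Ir\<close> unfolding L2_I2_eq by blast
    define s where "s = lin_poly b d"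
    have "moment_matrix M Il *v a = - (moment_matrix M Ir *v b)"
      using sum by (simp add: eq_neg_iff_add_eq_0)
    also have "\<dots> = s *\<^sub>R (moment_matrix M Il *v a\<^sub>1)"
      using right_factor[of b] a\<^sub>1 by (simp add: s_def)
    finally have "moment_matrix M Il *v (a - s *\<^sub>R a\<^sub>1) = 0"
      by (simp add: matrix_vector_mult_diff_distrib matrix_vector_mult_scaleR)
    moreover have "moment_matrix M Ir *v (b - s *\<^sub>R b\<^sub>1) = 0"
      using right_factor[of b]
      by (simp add: s_def matrix_vector_mult_diff_distrib matrix_vector_mult_scaleR)
    ultimately have "AE x in M. split_poly Il Ir (a - s *\<^sub>R a\<^sub>1) (b - s *\<^sub>R b\<^sub>1) x = 0"
      unfolding split_poly_AE_eq_0_iff ..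
    then have "AE x in M. g x = s * f x"
      by (rule eventually_mono) (simp add: g f_def split_poly_diff_scaleR)
    then show ?thesis ..
  qed
  ultimately show ?thesis by blast
qed

lemma split_moments_swap: "split_moments M Ir Il"
  using disjoint right.finite_second_moments_axioms left.finite_second_moments_axioms
  by (auto intro!: split_moments.intro split_moments_axioms.intro)

end

lemma finite_second_moments_atLeastLessThan:
  assumes "loc_finite_borel M"
  shows "finite_second_moments M {a..<b}"
proof
  have sets: "sets M = sets borel" and finite: "emeasure M {a..b} < \<infinity>"
    using assms unfolding loc_finite_borel_def by auto
  show "{a..<b} \<in> sets M"
    using sets by simp
  fix k :: nat
  have "emeasure M {a..<b} \<le> emeasure M {a..b}"
    using sets by (intro emeasure_mono) auto
  with finite have "emeasure M {a..<b} < \<infinity>" by simp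
  moreover have "\<bar>x\<bar> ^ k \<le> (\<bar>a\<bar> + \<bar>b\<bar>) ^ k" if "x \<in> {a..<b}" for x
    using that by (intro power_mono) auto
  ultimately show "set_integrable M {a..<b} (\<lambda>x. x ^ k)"
    unfolding set_integrable_def using sets
    by (intro integrableI_bounded_set[where A = "{a..<b}" and B = "(\<bar>a\<bar> + \<bar>b\<bar>) ^ k"])
      (auto simp: measurable_cong_sets[OF sets refl] power_abs split: split_indicator)
qed

theorem lemma2:
  fixes M :: "real measure" and j k :: int
  assumes "loc_finite_borel M"
  defines "Il \<equiv> dyadic_left j k" and "Ir \<equiv> dyadic_right j k"
  shows
   "(emeasure M Il > 0 \<and> emeasure M Ir > 0 \<and>
      ((pos_def_mat (moment_matrix M Il) \<and> det (moment_matrix M Ir) = 0) \<or>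
       (pos_def_mat (moment_matrix M Ir) \<and> det (moment_matrix M Il) = 0))
     \<longrightarrow> (\<exists>f\<in>L2_I2 M Il Ir. \<not> (AE x in M. f x = 0) \<and>
            (\<forall>g\<in>L2_I2 M Il Ir. \<exists>c::real. AE x in M. g x = c * f x)))
  \<and> ((\<not> (pos_def_mat (moment_matrix M Il) \<and> pos_def_mat (moment_matrix M Ir)) \<and>
      \<not> (emeasure M Il > 0 \<and> emeasure M Ir > 0 \<and>
         ((pos_def_mat (moment_matrix M Il) \<and> det (moment_matrix M Ir) = 0) \<or>
          (pos_def_mat (moment_matrix M Ir) \<and> det (moment_matrix M Il) = 0))))
     \<longrightarrow> (\<forall>f\<in>L2_I2 M Il Ir. AE x in M. f x = 0))"
proof -
  interpret split_moments M Il Ir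
    using assms(1) unfolding Il_def Ir_def dyadic_left_def dyadic_right_def
    by (auto intro!: split_moments.intro split_moments_axioms.intro finite_second_moments_atLeastLessThan)
  interpret swapped: split_moments M Ir Il
    by (rule split_moments_swap)
  show ?thesis
  proof (intro conjI impI)
    assume "emeasure M Il > 0 \<and> emeasure M Ir > 0 \<and>
      (pos_def_mat (moment_matrix M Il) \<and> det (moment_matrix M Ir) = 0 \<or>
       pos_def_mat (moment_matrix M Ir) \<and> det (moment_matrix M Il) = 0)"
    then show "\<exists>f\<in>L2_I2 M Il Ir. \<not> (AE x in M. f x = 0) \<and>
        (\<forall>g\<in>L2_I2 M Il Ir. \<exists>c::real. AE x in M. g x = c * f x)"
      using L2_I2_one_dimensional swapped.L2_I2_one_dimensional L2_I2_commute[of M Il Ir]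
      by (metis order_less_irrefl)
  next
    assume "\<not> (pos_def_mat (moment_matrix M Il) \<and> pos_def_mat (moment_matrix M Ir)) \<and>
      \<not> (emeasure M Il > 0 \<and> emeasure M Ir > 0 \<and>
         (pos_def_mat (moment_matrix M Il) \<and> det (moment_matrix M Ir) = 0 \<or>
          pos_def_mat (moment_matrix M Ir) \<and> det (moment_matrix M Il) = 0))"
    then show "\<forall>f\<in>L2_I2 M Il Ir. AE x in M. f x = 0"
      using left.pos_def_moment_matrix_iff right.pos_def_moment_matrix_iff
      by (intro L2_I2_trivial) (auto simp: zero_less_iff_neq_zero)
  qed
qed

end
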